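(* Let $\eta,\Sigma,\theta > 0$ and let $\tau \colon \mathbb{R}^{2} \to \mathbb{R}$ satisfy: ($\tau_{1}$) for every $t \in \mathbb{R}$, $y \mapsto \tau(y,t)$ is $C^{1,1}$ and $|\dot{\tau}(y_{2},t) - \dot{\tau}(y_{1},t)| \leq 2\Sigma|y_{2}-y_{1}|$ for all $y_{1},y_{2}$; ($\tau_{2}$) $\theta|t_{2}-t_{1}| \leq |\tau(y,t_{2}) - \tau(y,t_{1})| \leq \theta^{-1}|t_{2}-t_{1}|$ for all $t_{1},t_{2},y \in \mathbb{R}$; ($\tau_{3}$) $|\dot{\tau}(y,t_{2}) - \dot{\tau}(y,t_{1})| \leq \eta\sqrt{|t_{2}-t_{1}|}$ for all $y,t_{1},t_{2} \in \mathbb{R}$, where $\dot{\tau} = \partial_{y}\tau$. Define $\phi \colon \mathbb{W} \to \mathbb{L}$ by $\phi(0,y,\tau(y,t)) := (\dot{\tau}(y,t),0,0)$, let $\Gamma := \{w \cdot \phi(w) : w \in \mathbb{W}\}$, and $\Psi(y,t) := (0,y,\tau(y,t)) \cdot (\dot{\tau}(y,t),0,0)$. Then $\phi$ is an intrinsic Lipschitz function (i.e. $\Gamma$ is an intrinsic $L$-Lipschitz graph over $\mathbb{W}$), and $\Psi$ is a bilipschitz homeomorphism $(\mathbb{W},d_{\mathrm{par}}) \to (\Gamma,d)$; the intrinsic Lipschitz constant $L$ and the bilipschitz constant depend only on $\eta,\Sigma,\theta$.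
   Context: $\mathbb{H}$ is $\mathbb{R}^{3}$ with group law $(x_{1},y_{1},t_{1}) \cdot (x_{2},y_{2},t_{2}) = (x_{1}+x_{2},y_{1}+y_{2},t_{1}+t_{2}+\tfrac{1}{2}(x_{1}y_{2}-x_{2}y_{1}))$ and metric $d(p,q) = \|q^{-1}\cdot p\|$ with $\|(x,y,t)\| = \max\{\sqrt{x^{2}+y^{2}},\sqrt{|t|}\}$. $\mathbb{W} = \{(0,y,t)\} \subset \mathbb{H}$, identified with $\mathbb{R}^{2}$ with metric $d_{\mathrm{par}}((y,t),(\xi,\tau)) = \max\{|y-\xi|,|t-\tau|^{1/2}\}$, and $\mathbb{L} = \{(x,0,0)\}$. Every $p \in \mathbb{H}$ splits uniquely as $p = w \cdot v$ with $w \in \mathbb{W}$, $v \in \mathbb{L}$; $\Pi_{\mathbb{W}}(p) := w = (0,y,t+\tfrac{1}{2}xy)$ and $\Pi_{\mathbb{L}}(p) := v = (x,0,0)$ for $p = (x,y,t)$. A set $\Gamma$ is an intrinsic $L$-Lipschitz graph over $\mathbb{W}$ if $\Pi_{\mathbb{W}}|_{\Gamma}$ is a bijection onto $\mathbb{W}$ and $\|\Pi_{\mathbb{L}}(q^{-1}\cdot p)\| \leq L\|\Pi_{\mathbb{W}}(q^{-1}\cdot p)\|$ for all $p,q \in \Gamma$. By ($\tau_{2}$), for each $y$ the map $t \mapsto \tau(y,t)$ is a bijection of $\mathbb{R}$, so $\phi$ is well defined on all of $\mathbb{W}$. *)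

theory Defs
  imports "HOL-Analysis.Analysis"
begin

type_synonym heis = "real \<times> real \<times> real"

definition hmul :: "heis \<Rightarrow> heis \<Rightarrow> heis" where
  "hmul p q = (case p of (x1, y1, t1) \<Rightarrow> case q of (x2, y2, t2) \<Rightarrow>
     (x1 + x2, y1 + y2, t1 + t2 + (x1 * y2 - x2 * y1) / 2))"

definition hinv :: "heis \<Rightarrow> heis" where
  "hinv p = (case p of (x, y, t) \<Rightarrow> (-x, -y, -t))"

definition hnorm :: "heis \<Rightarrow> real" where
  "hnorm p = (case p of (x, y, t) \<Rightarrow> max (sqrt (x\<^sup>2 + y\<^sup>2)) (sqrt \<bar>t\<bar>))"

definition hdist :: "heis \<Rightarrow> heis \<Rightarrow> real" where
  "hdist p q = hnorm (hmul (hinv q) p)"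

definition Wset :: "heis set" where
  "Wset = {(0, y, t) | y t. True}"

definition Lset :: "heis set" where
  "Lset = {(x, 0, 0) | x. True}"

definition piW :: "heis \<Rightarrow> heis" where
  "piW p = (case p of (x, y, t) \<Rightarrow> (0, y, t + x * y / 2))"

definition piL :: "heis \<Rightarrow> heis" where
  "piL p = (case p of (x, y, t) \<Rightarrow> (x, 0, 0))"

text \<open>Parabolic distance on W identified with R^2 via (y,t) <-> (0,y,t).\<close>
definition dpar :: "real \<times> real \<Rightarrow> real \<times> real \<Rightarrow> real" where
  "dpar a b = (case a of (y, t) \<Rightarrow> case b of (\<xi>, s) \<Rightarrow> max \<bar>y - \<xi>\<bar> (sqrt \<bar>t - s\<bar>))"

definition intrinsic_lipschitz_graph :: "real \<Rightarrow> heis set \<Rightarrow> bool" where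
  "intrinsic_lipschitz_graph L \<Gamma> \<longleftrightarrow>
     bij_betw piW \<Gamma> Wset \<and>
     (\<forall>p\<in>\<Gamma>. \<forall>q\<in>\<Gamma>. hnorm (piL (hmul (hinv q) p)) \<le> L * hnorm (piW (hmul (hinv q) p)))"

text \<open>phi(0,y,tau(y,t)) := (taudot(y,t),0,0); the t is unique by (tau2).\<close>
definition phi :: "(real \<Rightarrow> real \<Rightarrow> real) \<Rightarrow> (real \<Rightarrow> real \<Rightarrow> real) \<Rightarrow> heis \<Rightarrow> heis" where
  "phi \<tau> \<tau>d w = (case w of (_, y, s) \<Rightarrow> (\<tau>d y (THE t. \<tau> y t = s), 0, 0))"

definition Gamma :: "(real \<Rightarrow> real \<Rightarrow> real) \<Rightarrow> (real \<Rightarrow> real \<Rightarrow> real) \<Rightarrow> heis set" where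
  "Gamma \<tau> \<tau>d = (\<lambda>w. hmul w (phi \<tau> \<tau>d w)) ` Wset"

definition Psi :: "(real \<Rightarrow> real \<Rightarrow> real) \<Rightarrow> (real \<Rightarrow> real \<Rightarrow> real) \<Rightarrow> real \<times> real \<Rightarrow> heis" where
  "Psi \<tau> \<tau>d a = (case a of (y, t) \<Rightarrow> hmul (0, y, \<tau> y t) (\<tau>d y t, 0, 0))"

end

theory Submission
  imports Defs
begin

text \<open>
  With \<open>p = \<Psi>(y\<^sub>1,t\<^sub>1)\<close> and \<open>q = \<Psi>(y\<^sub>2,t\<^sub>2)\<close>, the increment \<open>q\<inverse>p\<close> has
  \<open>\<bbbL>\<close>-part \<open>\<tau>d(y\<^sub>1,t\<^sub>1) - \<tau>d(y\<^sub>2,t\<^sub>2)\<close> and \<open>\<bbbW>\<close>-part \<open>(y\<^sub>1 - y\<^sub>2, S)\<close>, where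
  \<open>S = \<tau>(y\<^sub>1,t\<^sub>1) - \<tau>(y\<^sub>2,t\<^sub>2) - \<tau>d(y\<^sub>2,t\<^sub>2) (y\<^sub>1 - y\<^sub>2)\<close> is the gap between
  \<open>\<tau>(y\<^sub>1,t\<^sub>1)\<close> and the tangent line of \<open>\<tau>(\<cdot>,t\<^sub>2)\<close> at \<open>y\<^sub>2\<close>. Taylor's formula with
  (\<open>\<tau>\<^sub>1\<close>) and the H\<ouml>lder bound (\<open>\<tau>\<^sub>3\<close>) show that \<open>S\<close> differs from the time increment
  \<open>\<tau>(y\<^sub>2,t\<^sub>1) - \<tau>(y\<^sub>2,t\<^sub>2)\<close>, which is comparable to \<open>t\<^sub>1 - t\<^sub>2\<close> by (\<open>\<tau>\<^sub>2\<close>), by at most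
  \<open>\<eta> sqrt|t\<^sub>1 - t\<^sub>2| |y\<^sub>1 - y\<^sub>2| + 2\<Sigma> (y\<^sub>1 - y\<^sub>2)\<^sup>2\<close>. Absorbing the mixed term by
  AM-GM bounds \<open>|t\<^sub>1 - t\<^sub>2|\<close> by a multiple of \<open>|S| + (y\<^sub>1 - y\<^sub>2)\<^sup>2\<close>. Combined with
  \<open>|\<tau>d(y\<^sub>1,t\<^sub>1) - \<tau>d(y\<^sub>2,t\<^sub>2)| \<le> 2\<Sigma> |y\<^sub>1 - y\<^sub>2| + \<eta> sqrt|t\<^sub>1 - t\<^sub>2|\<close>, this yields
  the intrinsic Lipschitz bound against \<open>max(|y\<^sub>1 - y\<^sub>2|, sqrt|S|)\<close> as well as both
  comparisons between \<open>d(p, q)\<close> and \<open>d\<^sub>p\<^sub>a\<^sub>r((y\<^sub>1,t\<^sub>1), (y\<^sub>2,t\<^sub>2))\<close>.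
\<close>

lemma abs_linearization_error_le:
  fixes f f' :: "real \<Rightarrow> real"
  assumes deriv: "\<And>y. (f has_real_derivative f' y) (at y)"
    and lip: "\<And>y1 y2. \<bar>f' y2 - f' y1\<bar> \<le> M * \<bar>y2 - y1\<bar>"
  shows "\<bar>f a - f b - f' b * (a - b)\<bar> \<le> M * (a - b)\<^sup>2"
proof -
  have "norm (f a - f b - (a - b) *\<^sub>R f' b) \<le> norm (a - b) * (M * \<bar>a - b\<bar>)"
  proof (rule vector_differentiable_bound_linearization
      [where a = b and b = a and S = "closed_segment b a" and ?x0.0 = b])
    show "(f has_vector_derivative f' x) (at x within closed_segment b a)" for x
      using deriv has_field_derivative_at_within has_real_derivative_iff_has_vector_derivative
      by blast
    show "norm (f' x - f' b) \<le> M * \<bar>a - b\<bar>" if "x \<in> closed_segment b a" for x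
    proof -
      have "0 \<le> M" using lip[of 0 1] by simp
      moreover have "\<bar>x - b\<bar> \<le> \<bar>a - b\<bar>"
        using that dist_in_closed_segment[of x b a] by (simp add: dist_real_def abs_minus_commute)
      ultimately have "M * \<bar>x - b\<bar> \<le> M * \<bar>a - b\<bar>" by (simp add: mult_left_mono)
      with lip[of x b] show ?thesis by simp
    qed
  qed auto
  then show ?thesis by (simp add: power2_eq_square abs_mult_self_eq mult.commute mult.left_commute)
qed

lemma expanding_continuous_surj:
  fixes g :: "real \<Rightarrow> real"
  assumes "c > 0" and cont: "continuous_on UNIV g"
    and expanding: "\<And>t1 t2. c * \<bar>t2 - t1\<bar> \<le> \<bar>g t2 - g t1\<bar>"
  shows "surj g"
proof -
  have "inj g"
  proof (rule injI)
    fix x y assume "g x = g y"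
    with expanding[of x y] \<open>c > 0\<close> show "x = y" by (auto simp: mult_le_0_iff)
  qed
  have "s \<in> range g" for s
  proof -
    define R where "R = \<bar>s - g 0\<bar> / c + 1"
    have "R > 0" and far: "\<bar>s - g 0\<bar> < c * R" using \<open>c > 0\<close> by (auto simp: R_def field_simps)
    have far_R: "c * R \<le> \<bar>g R - g 0\<bar>" and far_minus_R: "c * R \<le> \<bar>g (-R) - g 0\<bar>"
      using expanding[of 0 R] expanding[of 0 "-R"] \<open>R > 0\<close> by auto
    have "(g (-R) < g 0 \<and> g 0 < g R) \<or> (g R < g 0 \<and> g 0 < g (-R))"
      using continuous_inj_imp_mono[of "-R" 0 R g] \<open>R > 0\<close> continuous_on_subset[OF cont]
        inj_on_subset[OF \<open>inj g\<close>] by auto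
    then show ?thesis
    proof
      assume "g (-R) < g 0 \<and> g 0 < g R"
      then have "g (-R) \<le> s" "s \<le> g R" using far far_R far_minus_R by auto
      then show ?thesis using IVT'[of g "-R" s R] continuous_on_subset[OF cont] \<open>R > 0\<close> by force
    next
      assume "g R < g 0 \<and> g 0 < g (-R)"
      then have "g R \<le> s" "s \<le> g (-R)" using far far_R far_minus_R by auto
      then show ?thesis using IVT2'[of g R s "-R"] continuous_on_subset[OF cont] \<open>R > 0\<close> by force
    qed
  qed
  then show ?thesis by blast
qed

definition absorption_const :: "real \<Rightarrow> real \<Rightarrow> real \<Rightarrow> real" where
  "absorption_const \<eta> \<Sigma> \<theta> = (4 * \<Sigma> + \<eta>\<^sup>2 / \<theta>) / \<theta>"

lemma absorption_const_nonneg: "\<theta> > 0 \<Longrightarrow> \<Sigma> \<ge> 0 \<Longrightarrow> absorption_const \<eta> \<Sigma> \<theta> \<ge> 0"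
  by (simp add: absorption_const_def)

lemma sq_le_by_absorption:
  fixes \<theta> \<eta> \<Sigma> r D S U :: real
  assumes "\<theta> > 0" and lower: "\<theta> * r\<^sup>2 \<le> \<bar>U\<bar>"
    and close: "\<bar>S - U\<bar> \<le> \<eta> * r * D + 2 * \<Sigma> * D\<^sup>2"
  shows "r\<^sup>2 \<le> 2 * \<bar>S\<bar> / \<theta> + absorption_const \<eta> \<Sigma> \<theta> * D\<^sup>2"
proof -
  have "2 * \<theta> * (\<eta> * r * D) \<le> \<theta>\<^sup>2 * r\<^sup>2 + \<eta>\<^sup>2 * D\<^sup>2"
    using sum_squares_ge_zero[of "\<theta> * r - \<eta> * D" 0]
    by (simp add: power2_eq_square algebra_simps)
  then have amgm: "\<eta> * r * D \<le> \<theta> * r\<^sup>2 / 2 + \<eta>\<^sup>2 * D\<^sup>2 / (2 * \<theta>)"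
    using \<open>\<theta> > 0\<close> by (simp add: field_simps power2_eq_square)
  have "\<theta> * r\<^sup>2 \<le> \<bar>S\<bar> + \<eta> * r * D + 2 * \<Sigma> * D\<^sup>2" using lower close by linarith
  with amgm have "\<theta> * r\<^sup>2 / 2 \<le> \<bar>S\<bar> + \<eta>\<^sup>2 * D\<^sup>2 / (2 * \<theta>) + 2 * \<Sigma> * D\<^sup>2"
    by linarith
  then have "\<theta> * r\<^sup>2 \<le> 2 * \<bar>S\<bar> + \<eta>\<^sup>2 * D\<^sup>2 / \<theta> + 4 * \<Sigma> * D\<^sup>2"
    by (simp add: field_simps)
  then show ?thesis
    using \<open>\<theta> > 0\<close> by (simp add: absorption_const_def field_simps)
qed

lemma le_by_absorption:
  fixes \<theta> \<eta> \<Sigma> r D S U M c :: real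
  assumes "\<theta> > 0" and "\<Sigma> \<ge> 0" and "r \<ge> 0" and "\<theta> * r\<^sup>2 \<le> \<bar>U\<bar>"
    and "\<bar>S - U\<bar> \<le> \<eta> * r * D + 2 * \<Sigma> * D\<^sup>2"
    and DM: "\<bar>D\<bar> \<le> M" and SM: "\<bar>S\<bar> \<le> c * M\<^sup>2"
  shows "r \<le> sqrt (2 * c / \<theta> + absorption_const \<eta> \<Sigma> \<theta>) * M"
proof -
  let ?K = "absorption_const \<eta> \<Sigma> \<theta>"
  have "r\<^sup>2 \<le> 2 * \<bar>S\<bar> / \<theta> + ?K * D\<^sup>2"
    using sq_le_by_absorption assms by blast
  also have "\<dots> \<le> 2 * (c * M\<^sup>2) / \<theta> + ?K * M\<^sup>2"
    using SM power_mono[OF DM abs_ge_zero, of 2] \<open>\<theta> > 0\<close>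
      absorption_const_nonneg[OF \<open>\<theta> > 0\<close> \<open>\<Sigma> \<ge> 0\<close>]
    by (intro add_mono divide_right_mono mult_left_mono) auto
  also have "\<dots> = (2 * c / \<theta> + ?K) * M\<^sup>2" by (simp add: field_simps)
  finally have "sqrt (r\<^sup>2) \<le> sqrt ((2 * c / \<theta> + ?K) * M\<^sup>2)" by (rule real_sqrt_le_mono)
  then show ?thesis using \<open>r \<ge> 0\<close> DM by (simp add: real_sqrt_mult)
qed

lemma Psi_eq: "Psi \<tau> \<tau>d (y, t) = (\<tau>d y t, y, \<tau> y t - \<tau>d y t * y / 2)"
  by (simp add: Psi_def hmul_def)

lemma piW_Psi: "piW (Psi \<tau> \<tau>d (y, t)) = (0, y, \<tau> y t)"
  by (simp add: Psi_eq piW_def)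

lemma hmul_hinv_Psi:
  "hmul (hinv (Psi \<tau> \<tau>d (y2, t2))) (Psi \<tau> \<tau>d (y1, t1)) =
    (\<tau>d y1 t1 - \<tau>d y2 t2, y1 - y2,
     \<tau> y1 t1 - \<tau> y2 t2 - (\<tau>d y1 t1 + \<tau>d y2 t2) * (y1 - y2) / 2)"
  by (simp add: Psi_def hmul_def hinv_def field_simps)

lemma hnorm_piL: "hnorm (piL (a, b, c)) = \<bar>a\<bar>"
  by (simp add: hnorm_def piL_def)

lemma hnorm_piW: "hnorm (piW (a, b, c)) = max \<bar>b\<bar> (sqrt \<bar>c + a * b / 2\<bar>)"
  by (simp add: hnorm_def piW_def)

lemma phi_in_Lset: "phi \<tau> \<tau>d w \<in> Lset"
  by (auto simp: Lset_def phi_def split: prod.split)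

lemma dpar_eq: "dpar (y1, t1) (y2, t2) = max \<bar>y1 - y2\<bar> (sqrt \<bar>t1 - t2\<bar>)"
  by (simp add: dpar_def)

definition intrinsic_lip_const :: "real \<Rightarrow> real \<Rightarrow> real \<Rightarrow> real" where
  "intrinsic_lip_const \<eta> \<Sigma> \<theta> = 2 * \<Sigma> + \<eta> * sqrt (2 / \<theta> + absorption_const \<eta> \<Sigma> \<theta>)"

definition bilip_const :: "real \<Rightarrow> real \<Rightarrow> real \<Rightarrow> real" where
  "bilip_const \<eta> \<Sigma> \<theta> = 2 * \<Sigma> + \<eta> + 1 + sqrt (1 / \<theta> + 2 * \<eta> + 3 * \<Sigma>)
     + sqrt (3 / \<theta> + absorption_const \<eta> \<Sigma> \<theta>)"

lemma bilip_const_ge_one: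
  assumes "\<eta> \<ge> 0" and "\<Sigma> \<ge> 0" and "\<theta> > 0"
  shows "1 \<le> bilip_const \<eta> \<Sigma> \<theta>"
  using assms absorption_const_nonneg[OF \<open>\<theta> > 0\<close> \<open>\<Sigma> \<ge> 0\<close>, of \<eta>]
  by (simp add: bilip_const_def add_nonneg_nonneg)

locale tau_graph =
  fixes \<eta> \<Sigma> \<theta> :: real and \<tau> \<tau>d :: "real \<Rightarrow> real \<Rightarrow> real"
  assumes eta_nonneg: "\<eta> \<ge> 0" and Sigma_nonneg: "\<Sigma> \<ge> 0" and theta_pos: "\<theta> > 0"
    and has_deriv: "\<And>y t. ((\<lambda>y'. \<tau> y' t) has_real_derivative \<tau>d y t) (at y)"
    and deriv_lipschitz: "\<And>t y z. \<bar>\<tau>d z t - \<tau>d y t\<bar> \<le> 2 * \<Sigma> * \<bar>z - y\<bar>"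
    and time_expanding: "\<And>s t y. \<theta> * \<bar>t - s\<bar> \<le> \<bar>\<tau> y t - \<tau> y s\<bar>"
    and time_lipschitz: "\<And>s t y. \<bar>\<tau> y t - \<tau> y s\<bar> \<le> \<bar>t - s\<bar> / \<theta>"
    and deriv_hoelder: "\<And>y s t. \<bar>\<tau>d y t - \<tau>d y s\<bar> \<le> \<eta> * sqrt \<bar>t - s\<bar>"
begin

lemma tau_inj: "\<tau> y t1 = \<tau> y t2 \<Longrightarrow> t1 = t2"
  using time_expanding[where s = t1 and t = t2 and y = y] theta_pos by (auto simp: mult_le_0_iff)

lemma surj_tau: "surj (\<tau> y)"
proof (rule expanding_continuous_surj[OF theta_pos _ time_expanding])
  have "(1 / \<theta>)-lipschitz_on UNIV (\<tau> y)"
    by (rule lipschitz_onI) (use time_lipschitz theta_pos in \<open>auto simp: dist_real_def\<close>)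
  then show "continuous_on UNIV (\<tau> y)" by (rule lipschitz_on_continuous_on)
qed

lemma Psi_eq_graph_point: "Psi \<tau> \<tau>d (y, t) = hmul (0, y, \<tau> y t) (phi \<tau> \<tau>d (0, y, \<tau> y t))"
proof -
  have "(THE t'. \<tau> y t' = \<tau> y t) = t" using tau_inj by blast
  then show ?thesis by (simp add: Psi_def phi_def)
qed

lemma Wset_eq: "Wset = range (\<lambda>(y, t). (0, y, \<tau> y t))"
proof -
  have "(0, y, s) \<in> range (\<lambda>(y, t). (0, y, \<tau> y t))" for y s
  proof -
    obtain t where "\<tau> y t = s" using surj_tau by (metis surjD)
    then show ?thesis by (auto intro: image_eqI[of _ _ "(y, t)"])
  qed
  then show ?thesis by (auto simp: Wset_def)
qed

lemma Gamma_eq_range_Psi: "Gamma \<tau> \<tau>d = range (Psi \<tau> \<tau>d)"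
  unfolding Gamma_def Wset_eq image_image by (simp add: Psi_eq_graph_point[symmetric] case_prod_beta')

lemma inj_piW_Psi: "inj (piW \<circ> Psi \<tau> \<tau>d)"
  by (rule injI) (auto simp: piW_Psi dest: tau_inj)

lemma bij_betw_Psi_Gamma: "bij_betw (Psi \<tau> \<tau>d) UNIV (Gamma \<tau> \<tau>d)"
  using inj_piW_Psi by (simp add: bij_betw_def Gamma_eq_range_Psi inj_on_imageI2)

lemma bij_betw_piW_Gamma: "bij_betw piW (Gamma \<tau> \<tau>d) Wset"
proof -
  have "piW \<circ> Psi \<tau> \<tau>d = (\<lambda>(y, t). (0, y, \<tau> y t))" by (auto simp: piW_Psi)
  then have "piW ` Gamma \<tau> \<tau>d = Wset" by (simp add: Gamma_eq_range_Psi Wset_eq image_comp)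
  then show ?thesis
    using inj_piW_Psi by (simp add: bij_betw_def Gamma_eq_range_Psi inj_on_imageI)
qed

definition tangent_gap :: "real \<Rightarrow> real \<Rightarrow> real \<Rightarrow> real \<Rightarrow> real" where
  "tangent_gap y1 t1 y2 t2 = \<tau> y1 t1 - \<tau> y2 t2 - \<tau>d y2 t2 * (y1 - y2)"

lemma taud_increment_le:
  "\<bar>\<tau>d y1 t1 - \<tau>d y2 t2\<bar> \<le> 2 * \<Sigma> * \<bar>y1 - y2\<bar> + \<eta> * sqrt \<bar>t1 - t2\<bar>"
  using deriv_lipschitz[where y = y2 and z = y1 and t = t1]
    deriv_hoelder[where y = y2 and s = t2 and t = t1] by linarith

lemma tangent_gap_near_time_increment:
  "\<bar>tangent_gap y1 t1 y2 t2 - (\<tau> y2 t1 - \<tau> y2 t2)\<bar>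
     \<le> \<eta> * sqrt \<bar>t1 - t2\<bar> * \<bar>y1 - y2\<bar> + 2 * \<Sigma> * \<bar>y1 - y2\<bar>\<^sup>2"
proof -
  have "tangent_gap y1 t1 y2 t2 - (\<tau> y2 t1 - \<tau> y2 t2) =
      (\<tau> y1 t1 - \<tau> y2 t1 - \<tau>d y2 t1 * (y1 - y2)) + (\<tau>d y2 t1 - \<tau>d y2 t2) * (y1 - y2)"
    by (simp add: tangent_gap_def algebra_simps)
  moreover have "\<bar>\<tau> y1 t1 - \<tau> y2 t1 - \<tau>d y2 t1 * (y1 - y2)\<bar> \<le> 2 * \<Sigma> * (y1 - y2)\<^sup>2"
    using abs_linearization_error_le[OF has_deriv deriv_lipschitz] .
  moreover have "\<bar>(\<tau>d y2 t1 - \<tau>d y2 t2) * (y1 - y2)\<bar> \<le> \<eta> * sqrt \<bar>t1 - t2\<bar> * \<bar>y1 - y2\<bar>"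
    unfolding abs_mult using deriv_hoelder[where y = y2 and s = t2 and t = t1]
    by (intro mult_right_mono) auto
  ultimately show ?thesis by (simp add: abs_triangle_ineq order_trans)
qed

lemma sqrt_time_increment_le:
  assumes "\<bar>y1 - y2\<bar> \<le> M" and "\<bar>tangent_gap y1 t1 y2 t2\<bar> \<le> c * M\<^sup>2"
  shows "sqrt \<bar>t1 - t2\<bar> \<le> sqrt (2 * c / \<theta> + absorption_const \<eta> \<Sigma> \<theta>) * M"
proof (rule le_by_absorption[where D = "\<bar>y1 - y2\<bar>", OF theta_pos Sigma_nonneg])
  show "\<theta> * (sqrt \<bar>t1 - t2\<bar>)\<^sup>2 \<le> \<bar>\<tau> y2 t1 - \<tau> y2 t2\<bar>"
    using time_expanding[where y = y2 and s = t2 and t = t1] by simp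
qed (use assms tangent_gap_near_time_increment in auto)

lemma abs_tangent_gap_le:
  "\<bar>tangent_gap y1 t1 y2 t2\<bar>
     \<le> \<bar>t1 - t2\<bar> / \<theta> + \<eta> * sqrt \<bar>t1 - t2\<bar> * \<bar>y1 - y2\<bar> + 2 * \<Sigma> * \<bar>y1 - y2\<bar>\<^sup>2"
  using tangent_gap_near_time_increment[of y1 t1 y2 t2]
    time_lipschitz[where y = y2 and s = t2 and t = t1] by linarith

lemma taud_increment_le_intrinsic:
  "\<bar>\<tau>d y1 t1 - \<tau>d y2 t2\<bar>
     \<le> intrinsic_lip_const \<eta> \<Sigma> \<theta> * max \<bar>y1 - y2\<bar> (sqrt \<bar>tangent_gap y1 t1 y2 t2\<bar>)"
proof -
  define M where "M = max \<bar>y1 - y2\<bar> (sqrt \<bar>tangent_gap y1 t1 y2 t2\<bar>)"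
  have "\<bar>y1 - y2\<bar> \<le> M" by (simp add: M_def)
  moreover have "\<bar>tangent_gap y1 t1 y2 t2\<bar> \<le> 1 * M\<^sup>2"
    using power_mono[of "sqrt \<bar>tangent_gap y1 t1 y2 t2\<bar>" M 2] by (simp add: M_def)
  ultimately have "sqrt \<bar>t1 - t2\<bar> \<le> sqrt (2 * 1 / \<theta> + absorption_const \<eta> \<Sigma> \<theta>) * M"
    by (rule sqrt_time_increment_le)
  with \<open>\<bar>y1 - y2\<bar> \<le> M\<close> have "2 * \<Sigma> * \<bar>y1 - y2\<bar> + \<eta> * sqrt \<bar>t1 - t2\<bar>
      \<le> 2 * \<Sigma> * M + \<eta> * (sqrt (2 / \<theta> + absorption_const \<eta> \<Sigma> \<theta>) * M)"
    using Sigma_nonneg eta_nonneg by (intro add_mono mult_left_mono) auto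
  then show ?thesis
    using taud_increment_le[of y1 t1 y2 t2]
    by (simp add: M_def intrinsic_lip_const_def algebra_simps)
qed

lemma intrinsic_lipschitz_graph_Gamma:
  "intrinsic_lipschitz_graph (intrinsic_lip_const \<eta> \<Sigma> \<theta>) (Gamma \<tau> \<tau>d)"
  unfolding intrinsic_lipschitz_graph_def
proof (intro conjI ballI bij_betw_piW_Gamma)
  fix p q assume "p \<in> Gamma \<tau> \<tau>d" "q \<in> Gamma \<tau> \<tau>d"
  then obtain y1 t1 y2 t2 where p: "p = Psi \<tau> \<tau>d (y1, t1)" and q: "q = Psi \<tau> \<tau>d (y2, t2)"
    by (auto simp: Gamma_eq_range_Psi)
  have "\<tau> y1 t1 - \<tau> y2 t2 - (\<tau>d y1 t1 + \<tau>d y2 t2) * (y1 - y2) / 2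
      + (\<tau>d y1 t1 - \<tau>d y2 t2) * (y1 - y2) / 2 = tangent_gap y1 t1 y2 t2"
    by (simp add: tangent_gap_def field_simps)
  then show "hnorm (piL (hmul (hinv q) p)) \<le> intrinsic_lip_const \<eta> \<Sigma> \<theta> * hnorm (piW (hmul (hinv q) p))"
    using taud_increment_le_intrinsic by (simp add: p q hmul_hinv_Psi hnorm_piL hnorm_piW)
qed

lemma hdist_Psi:
  "hdist (Psi \<tau> \<tau>d (y1, t1)) (Psi \<tau> \<tau>d (y2, t2)) =
    max (sqrt ((\<tau>d y1 t1 - \<tau>d y2 t2)\<^sup>2 + (y1 - y2)\<^sup>2))
        (sqrt \<bar>tangent_gap y1 t1 y2 t2 - (\<tau>d y1 t1 - \<tau>d y2 t2) * (y1 - y2) / 2\<bar>)"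
proof -
  have "\<tau> y1 t1 - \<tau> y2 t2 - (\<tau>d y1 t1 + \<tau>d y2 t2) * (y1 - y2) / 2
      = tangent_gap y1 t1 y2 t2 - (\<tau>d y1 t1 - \<tau>d y2 t2) * (y1 - y2) / 2"
    by (simp add: tangent_gap_def field_simps)
  then show ?thesis by (simp add: hdist_def hmul_hinv_Psi hnorm_def)
qed

lemma taud_increment_le_dpar:
  "\<bar>\<tau>d y1 t1 - \<tau>d y2 t2\<bar> \<le> (2 * \<Sigma> + \<eta>) * dpar (y1, t1) (y2, t2)"
proof -
  have "2 * \<Sigma> * \<bar>y1 - y2\<bar> + \<eta> * sqrt \<bar>t1 - t2\<bar>
      \<le> 2 * \<Sigma> * dpar (y1, t1) (y2, t2) + \<eta> * dpar (y1, t1) (y2, t2)"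
    using Sigma_nonneg eta_nonneg by (intro add_mono mult_left_mono) (auto simp: dpar_eq)
  then show ?thesis using taud_increment_le[of y1 t1 y2 t2] by (simp add: algebra_simps)
qed

lemma abs_tangent_gap_le_dpar:
  "\<bar>tangent_gap y1 t1 y2 t2\<bar> \<le> (1 / \<theta> + \<eta> + 2 * \<Sigma>) * (dpar (y1, t1) (y2, t2))\<^sup>2"
proof -
  define P where "P = dpar (y1, t1) (y2, t2)"
  have D: "\<bar>y1 - y2\<bar> \<le> P" and r: "sqrt \<bar>t1 - t2\<bar> \<le> P" by (auto simp: P_def dpar_eq)
  have "\<bar>t1 - t2\<bar> \<le> P\<^sup>2" using power_mono[OF r, of 2] by simp
  moreover have "sqrt \<bar>t1 - t2\<bar> * \<bar>y1 - y2\<bar> \<le> P\<^sup>2"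
    using mult_mono[OF r D] D by (simp add: power2_eq_square)
  moreover have "\<bar>y1 - y2\<bar>\<^sup>2 \<le> P\<^sup>2" using power_mono[OF D, of 2] by simp
  ultimately have "\<bar>t1 - t2\<bar> / \<theta> + \<eta> * (sqrt \<bar>t1 - t2\<bar> * \<bar>y1 - y2\<bar>) + 2 * \<Sigma> * \<bar>y1 - y2\<bar>\<^sup>2
      \<le> P\<^sup>2 / \<theta> + \<eta> * P\<^sup>2 + 2 * \<Sigma> * P\<^sup>2"
    using theta_pos eta_nonneg Sigma_nonneg
    by (intro add_mono divide_right_mono mult_left_mono) auto
  then show ?thesis
    using abs_tangent_gap_le[of y1 t1 y2 t2] by (simp add: P_def algebra_simps add_divide_distrib)
qed

lemma hdist_Psi_le_dpar:
  "hdist (Psi \<tau> \<tau>d (y1, t1)) (Psi \<tau> \<tau>d (y2, t2)) \<le> bilip_const \<eta> \<Sigma> \<theta> * dpar (y1, t1) (y2, t2)"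
proof -
  define P where "P = dpar (y1, t1) (y2, t2)"
  define X where "X = \<tau>d y1 t1 - \<tau>d y2 t2"
  define B where "B = 1 / \<theta> + 2 * \<eta> + 3 * \<Sigma>"
  have D: "\<bar>y1 - y2\<bar> \<le> P" by (simp add: P_def dpar_eq)
  then have "P \<ge> 0" by linarith
  have X: "\<bar>X\<bar> \<le> (2 * \<Sigma> + \<eta>) * P" unfolding X_def P_def by (rule taud_increment_le_dpar)
  have "\<bar>X * (y1 - y2)\<bar> \<le> (2 * \<Sigma> + \<eta>) * P * P"
    unfolding abs_mult using X D by (intro mult_mono) auto
  then have "\<bar>tangent_gap y1 t1 y2 t2 - X * (y1 - y2) / 2\<bar>
      \<le> (1 / \<theta> + \<eta> + 2 * \<Sigma>) * P\<^sup>2 + (2 * \<Sigma> + \<eta>) * P * P / 2"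
    using abs_tangent_gap_le_dpar[of y1 t1 y2 t2] abs_triangle_ineq4[of "tangent_gap y1 t1 y2 t2"]
    by (simp add: P_def)
  also have "\<dots> \<le> B * P\<^sup>2"
    using eta_nonneg \<open>P \<ge> 0\<close> by (simp add: B_def power2_eq_square algebra_simps)
  finally have "\<bar>tangent_gap y1 t1 y2 t2 - X * (y1 - y2) / 2\<bar> \<le> B * P\<^sup>2" .
  then have vertical: "sqrt \<bar>tangent_gap y1 t1 y2 t2 - X * (y1 - y2) / 2\<bar> \<le> sqrt B * P"
    using real_sqrt_le_mono \<open>P \<ge> 0\<close> by (fastforce simp: real_sqrt_mult)
  have "sqrt (X\<^sup>2 + (y1 - y2)\<^sup>2) \<le> \<bar>X\<bar> + \<bar>y1 - y2\<bar>" by (rule sqrt_sum_squares_le_sum_abs)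
  then have horizontal: "sqrt (X\<^sup>2 + (y1 - y2)\<^sup>2) \<le> (2 * \<Sigma> + \<eta> + 1) * P"
    using X D by (simp add: algebra_simps)
  have "(2 * \<Sigma> + \<eta> + 1) * P \<le> bilip_const \<eta> \<Sigma> \<theta> * P" and "sqrt B * P \<le> bilip_const \<eta> \<Sigma> \<theta> * P"
    using \<open>P \<ge> 0\<close> theta_pos eta_nonneg Sigma_nonneg absorption_const_nonneg[OF theta_pos Sigma_nonneg]
    by (auto simp: bilip_const_def B_def intro!: mult_right_mono)
  with vertical horizontal show ?thesis by (simp add: hdist_Psi X_def P_def)
qed

lemma dpar_le_hdist_Psi:
  "dpar (y1, t1) (y2, t2) \<le> bilip_const \<eta> \<Sigma> \<theta> * hdist (Psi \<tau> \<tau>d (y1, t1)) (Psi \<tau> \<tau>d (y2, t2))"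
proof -
  define H where "H = hdist (Psi \<tau> \<tau>d (y1, t1)) (Psi \<tau> \<tau>d (y2, t2))"
  define X where "X = \<tau>d y1 t1 - \<tau>d y2 t2"
  have D: "\<bar>y1 - y2\<bar> \<le> H" and X: "\<bar>X\<bar> \<le> H"
    unfolding H_def hdist_Psi X_def using real_sqrt_ge_abs1 real_sqrt_ge_abs2 max.coboundedI1 by blast+
  have "sqrt \<bar>tangent_gap y1 t1 y2 t2 - X * (y1 - y2) / 2\<bar> \<le> H"
    by (simp add: H_def hdist_Psi X_def)
  then have "\<bar>tangent_gap y1 t1 y2 t2 - X * (y1 - y2) / 2\<bar> \<le> H\<^sup>2"
    using power_mono[of _ H 2] by fastforce
  moreover have "\<bar>X * (y1 - y2)\<bar> \<le> H * H" unfolding abs_mult using X D by (intro mult_mono) auto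
  ultimately have "\<bar>tangent_gap y1 t1 y2 t2\<bar> \<le> 3 / 2 * H\<^sup>2"
    by (simp add: power2_eq_square abs_le_iff) linarith
  with D have "sqrt \<bar>t1 - t2\<bar> \<le> sqrt (2 * (3 / 2) / \<theta> + absorption_const \<eta> \<Sigma> \<theta>) * H"
    by (rule sqrt_time_increment_le)
  then have "max \<bar>y1 - y2\<bar> (sqrt \<bar>t1 - t2\<bar>)
      \<le> (1 + sqrt (3 / \<theta> + absorption_const \<eta> \<Sigma> \<theta>)) * H"
    using D absorption_const_nonneg[OF theta_pos Sigma_nonneg] theta_pos
    by (simp add: algebra_simps add_increasing2)
  also have "\<dots> \<le> bilip_const \<eta> \<Sigma> \<theta> * H"
    using D eta_nonneg Sigma_nonneg theta_pos
    by (intro mult_right_mono) (auto simp: bilip_const_def)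
  finally show ?thesis by (simp add: dpar_eq H_def)
qed

end

theorem proposition7p5:
  fixes \<eta> \<Sigma> \<theta> :: real
  assumes "\<eta> > 0" and "\<Sigma> > 0" and "\<theta> > 0"
  shows "\<exists>L C. C > 0 \<and>
    (\<forall>(\<tau> :: real \<Rightarrow> real \<Rightarrow> real) (\<tau>d :: real \<Rightarrow> real \<Rightarrow> real).
      (\<forall>y t. ((\<lambda>y'. \<tau> y' t) has_real_derivative \<tau>d y t) (at y)) \<longrightarrow>
      (\<forall>t y1 y2. \<bar>\<tau>d y2 t - \<tau>d y1 t\<bar> \<le> 2 * \<Sigma> * \<bar>y2 - y1\<bar>) \<longrightarrow>
      (\<forall>t1 t2 y. \<theta> * \<bar>t2 - t1\<bar> \<le> \<bar>\<tau> y t2 - \<tau> y t1\<bar> \<and>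
                 \<bar>\<tau> y t2 - \<tau> y t1\<bar> \<le> \<bar>t2 - t1\<bar> / \<theta>) \<longrightarrow>
      (\<forall>y t1 t2. \<bar>\<tau>d y t2 - \<tau>d y t1\<bar> \<le> \<eta> * sqrt \<bar>t2 - t1\<bar>) \<longrightarrow>
      (\<forall>w\<in>Wset. phi \<tau> \<tau>d w \<in> Lset) \<and>
      intrinsic_lipschitz_graph L (Gamma \<tau> \<tau>d) \<and>
      bij_betw (Psi \<tau> \<tau>d) UNIV (Gamma \<tau> \<tau>d) \<and>
      (\<forall>a b. dpar a b / C \<le> hdist (Psi \<tau> \<tau>d a) (Psi \<tau> \<tau>d b) \<and>
             hdist (Psi \<tau> \<tau>d a) (Psi \<tau> \<tau>d b) \<le> C * dpar a b))"
proof (rule exI[of _ "intrinsic_lip_const \<eta> \<Sigma> \<theta>"], rule exI[of _ "bilip_const \<eta> \<Sigma> \<theta>"],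
    intro conjI allI impI)
  show C_pos: "bilip_const \<eta> \<Sigma> \<theta> > 0"
    using bilip_const_ge_one[of \<eta> \<Sigma> \<theta>] assms by simp
  fix \<tau> \<tau>d :: "real \<Rightarrow> real \<Rightarrow> real"
  assume "\<forall>y t. ((\<lambda>y'. \<tau> y' t) has_real_derivative \<tau>d y t) (at y)"
    and "\<forall>t y1 y2. \<bar>\<tau>d y2 t - \<tau>d y1 t\<bar> \<le> 2 * \<Sigma> * \<bar>y2 - y1\<bar>"
    and "\<forall>t1 t2 y. \<theta> * \<bar>t2 - t1\<bar> \<le> \<bar>\<tau> y t2 - \<tau> y t1\<bar> \<and>
                 \<bar>\<tau> y t2 - \<tau> y t1\<bar> \<le> \<bar>t2 - t1\<bar> / \<theta>"
    and "\<forall>y t1 t2. \<bar>\<tau>d y t2 - \<tau>d y t1\<bar> \<le> \<eta> * sqrt \<bar>t2 - t1\<bar>"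
  with assms interpret tau_graph \<eta> \<Sigma> \<theta> \<tau> \<tau>d
    by unfold_locales auto
  show "\<forall>w\<in>Wset. phi \<tau> \<tau>d w \<in> Lset" by (simp add: phi_in_Lset)
  show "intrinsic_lipschitz_graph (intrinsic_lip_const \<eta> \<Sigma> \<theta>) (Gamma \<tau> \<tau>d)"
    by (rule intrinsic_lipschitz_graph_Gamma)
  show "bij_betw (Psi \<tau> \<tau>d) UNIV (Gamma \<tau> \<tau>d)" by (rule bij_betw_Psi_Gamma)
  show "dpar a b / bilip_const \<eta> \<Sigma> \<theta> \<le> hdist (Psi \<tau> \<tau>d a) (Psi \<tau> \<tau>d b)" for a b
    using dpar_le_hdist_Psi C_pos by (cases a; cases b) (simp add: pos_divide_le_eq mult.commute)
  show "hdist (Psi \<tau> \<tau>d a) (Psi \<tau> \<tau>d b) \<le> bilip_const \<eta> \<Sigma> \<theta> * dpar a b" for a b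
    using hdist_Psi_le_dpar by (cases a; cases b) simp
qed

end
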